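(* Let $n\ge 2$ and let $f\colon Br_2^n\to Br_d^n$ be the homomorphism defined on generators by $f(\sigma_{i,0})=\sigma_i$ and $f(\sigma_{i,1})=\gamma_i\sigma_i\gamma_{i+1}$ for $i=1,\dots,n-1$. If $\Gamma_1,\Gamma_2\in Br_2^n$ satisfy $f(\Gamma_1)=f(\Gamma_2)$ in $Br_d^n$ (i.e. they are equal as dotted braids), then $\Gamma_1=\Gamma_2$ in $Br_2^n$.
   Context: $Br_2^n$ (the $\mathbb{Z}_2$-braid group) is the group with generators $\sigma_{i,0},\sigma_{i,1}$, $i=1,\dots,n-1$, and relations $\sigma_{i,\varepsilon}\sigma_{j,\eta}=\sigma_{j,\eta}\sigma_{i,\varepsilon}$ for all $|i-j|\ge 2$ and all $\varepsilon,\eta\in\{0,1\}$, and $\sigma_{i,\varepsilon}\sigma_{i+1,\eta}\sigma_{i,\xi}=\sigma_{i+1,\xi}\sigma_{i,\eta}\sigma_{i+1,\varepsilon}$ for $1\le i\le n-2$ and all $\varepsilon,\eta,\xi\in\{0,1\}$ with $\varepsilon+\eta+\xi\equiv 0\pmod 2$. The dotted braid group $Br_d^n$ is the group with generators $\sigma_1,\dots,\sigma_{n-1}$, $\gamma_1,\dots,\gamma_n$ and relations: $\sigma_i\sigma_j=\sigma_j\sigma_i$ for $|i-j|\ge2$; $\sigma_i\sigma_{i+1}\sigma_i=\sigma_{i+1}\sigma_i\sigma_{i+1}$ for $1\le i\le n-2$; $\gamma_i^2=e$ for $i=1,\dots,n$; $\gamma_i\gamma_j=\gamma_j\gamma_i$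 for all $i,j$; and $\gamma_i\gamma_{i+1}\sigma_i\gamma_i\gamma_{i+1}=\sigma_i$ for $i=1,\dots,n-2$. (The paper asserts that $f$ is a well-defined homomorphism.) *)

theory Defs
  imports Main
begin

text \<open>A word over a generator type 'g is a list of
letters (g, b), where b = True means the inverse letter g^-1.  Two words represent the
same element of the presented group iff they are related by the congruence generated
by free cancellation and the defining relations.\<close>

type_synonym 'g word = "('g \<times> bool) list"

definition inv_word :: "'g word \<Rightarrow> 'g word" where
  "inv_word w = rev (map (\<lambda>(g, b). (g, \<not> b)) w)"

definition pos :: "'g \<Rightarrow> 'g \<times> bool" where
  "pos g = (g, False)"

inductive pres_eq :: "('g word \<times> 'g word) set \<Rightarrow> 'g word \<Rightarrow> 'g word \<Rightarrow> bool"
  for R :: "('g word \<times> 'g word) set" where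
  refl: "pres_eq R w w"
| sym: "pres_eq R u v \<Longrightarrow> pres_eq R v u"
| trans: "pres_eq R u v \<Longrightarrow> pres_eq R v w \<Longrightarrow> pres_eq R u w"
| cancel: "pres_eq R (u @ [(g, b), (g, \<not> b)] @ v) (u @ v)"
| rel: "(l, r) \<in> R \<Longrightarrow> pres_eq R (u @ l @ v) (u @ r @ v)"

text \<open>Generators of Br_2^n: pairs (i, eps) standing for sigma_{i,eps}, 1 <= i <= n-1, eps in {0,1}.\<close>

definition gens2 :: "nat \<Rightarrow> (nat \<times> nat) set" where
  "gens2 n = {(i, e). 1 \<le> i \<and> i \<le> n - 1 \<and> e \<le> 1}"

definition br2_rels :: "nat \<Rightarrow> ((nat \<times> nat) word \<times> (nat \<times> nat) word) set" where
  "br2_rels n =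
     {([pos (i, e), pos (j, h)], [pos (j, h), pos (i, e)]) | i j e h.
        1 \<le> i \<and> i \<le> n - 1 \<and> 1 \<le> j \<and> j \<le> n - 1 \<and> (i + 2 \<le> j \<or> j + 2 \<le> i)
        \<and> e \<le> 1 \<and> h \<le> 1}
   \<union> {([pos (i, e), pos (i + 1, h), pos (i, x)], [pos (i + 1, x), pos (i, h), pos (i + 1, e)])
        | i e h x. 1 \<le> i \<and> i \<le> n - 2 \<and> e \<le> 1 \<and> h \<le> 1 \<and> x \<le> 1 \<and> even (e + h + x)}"

datatype dgen = Sig nat | Gam nat

definition brd_rels :: "nat \<Rightarrow> (dgen word \<times> dgen word) set" where
  "brd_rels n =
     {([pos (Sig i), pos (Sig j)], [pos (Sig j), pos (Sig i)]) | i j.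
        1 \<le> i \<and> i \<le> n - 1 \<and> 1 \<le> j \<and> j \<le> n - 1 \<and> (i + 2 \<le> j \<or> j + 2 \<le> i)}
   \<union> {([pos (Sig i), pos (Sig (i + 1)), pos (Sig i)],
        [pos (Sig (i + 1)), pos (Sig i), pos (Sig (i + 1))]) | i. 1 \<le> i \<and> i \<le> n - 2}
   \<union> {([pos (Gam i), pos (Gam i)], []) | i. 1 \<le> i \<and> i \<le> n}
   \<union> {([pos (Gam i), pos (Gam j)], [pos (Gam j), pos (Gam i)]) | i j.
        1 \<le> i \<and> i \<le> n \<and> 1 \<le> j \<and> j \<le> n}
   \<union> {([pos (Gam i), pos (Gam (i + 1)), pos (Sig i), pos (Gam i), pos (Gam (i + 1))],
        [pos (Sig i)]) | i. 1 \<le> i \<and> i \<le> n - 2}"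

fun f_gen :: "nat \<times> nat \<Rightarrow> dgen word" where
  "f_gen (i, e) = (if e = 0 then [pos (Sig i)]
                   else [pos (Gam i), pos (Sig i), pos (Gam (i + 1))])"

definition f_word :: "(nat \<times> nat) word \<Rightarrow> dgen word" where
  "f_word w = concat (map (\<lambda>(g, b). if b then inv_word (f_gen g) else f_gen g) w)"

end

theory Submission
  imports Defs
begin

text \<open>A left inverse of f is obtained by reading a dotted braid word from left to right while
  recording, for every strand position, whether it carries an odd number of dots. A dot only
  toggles this record; a crossing of positions i and i+1 is read as sigma_{i,eps}, where eps
  records whether exactly one of the two crossing strands is dotted, and it exchanges the two
  records. Every defining relation of the dotted braid group is read, from any dot record, as
  words equal in the Z_2-braid group, with the same final record. Read from the undotted state,
  f(w) gives back w itself.\<close>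

type_synonym dots = "nat \<Rightarrow> bool"

definition crossing_label :: "dots \<Rightarrow> nat \<Rightarrow> nat" where
  "crossing_label v i = (if v i = v (Suc i) then 0 else 1)"

fun read_letter :: "dgen \<times> bool \<Rightarrow> dots \<Rightarrow> (nat \<times> nat) word \<times> dots" where
  "read_letter (Gam j, b) v = ([], v(j := \<not> v j))"
| "read_letter (Sig i, b) v = ([((i, crossing_label v i), b)], v(i := v (Suc i), Suc i := v i))"

fun read_state :: "dgen word \<Rightarrow> dots \<Rightarrow> dots" where
  "read_state [] v = v"
| "read_state (x # xs) v = read_state xs (snd (read_letter x v))"

fun read_word :: "dgen word \<Rightarrow> dots \<Rightarrow> (nat \<times> nat) word" where
  "read_word [] v = []"
| "read_word (x # xs) v = fst (read_letter x v) @ read_word xs (snd (read_letter x v))"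

lemma read_state_append [simp]: "read_state (xs @ ys) v = read_state ys (read_state xs v)"
  by (induction xs arbitrary: v) auto

lemma read_word_append [simp]:
  "read_word (xs @ ys) v = read_word xs v @ read_word ys (read_state xs v)"
  by (induction xs arbitrary: v) auto

lemma pres_eq_context: "pres_eq R a b \<Longrightarrow> pres_eq R (x @ a @ y) (x @ b @ y)"
proof (induction rule: pres_eq.induct)
  case (refl w)
  show ?case by (rule pres_eq.refl)
next
  case (sym u v)
  show ?case using sym.IH by (rule pres_eq.sym)
next
  case (trans u v w)
  show ?case using trans.IH by (rule pres_eq.trans)
next
  case (cancel u g b v)
  show ?case using pres_eq.cancel[of R "x @ u" g b "v @ y"] by simp
next
  case (rel l r u v)
  then show ?case using pres_eq.rel[of l r R "x @ u" "v @ y"] by simp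
qed

lemma pres_eq_relation: "(l, r) \<in> R \<Longrightarrow> pres_eq R l r"
  using pres_eq.rel[of l r R "[]" "[]"] by simp

definition same_reading :: "nat \<Rightarrow> dgen word \<Rightarrow> dgen word \<Rightarrow> bool" where
  "same_reading n l r \<longleftrightarrow>
     (\<forall>v. pres_eq (br2_rels n) (read_word l v) (read_word r v) \<and> read_state l v = read_state r v)"

lemma same_reading_refl: "same_reading n w w"
  by (simp add: same_reading_def pres_eq.refl)

lemma same_reading_sym: "same_reading n u w \<Longrightarrow> same_reading n w u"
  by (auto simp: same_reading_def intro: pres_eq.sym)

lemma same_reading_trans: "same_reading n u v \<Longrightarrow> same_reading n v w \<Longrightarrow> same_reading n u w"
  by (auto simp: same_reading_def intro: pres_eq.trans)

lemma same_reading_context: "same_reading n l r \<Longrightarrow> same_reading n (u @ l @ w) (u @ r @ w)"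
  unfolding same_reading_def
  by (auto intro: pres_eq_context[of _ _ _ "read_word u _" "read_word w _", simplified])

lemma same_reading_cancel: "same_reading n [(g, b), (g, \<not> b)] []"
proof (cases g)
  case (Sig i)
  have "pres_eq (br2_rels n) [(c, b), (c, \<not> b)] []" for c
    using pres_eq.cancel[of "br2_rels n" "[]" c b "[]"] by simp
  with Sig show ?thesis
    by (auto simp: same_reading_def crossing_label_def fun_eq_iff)
next
  case (Gam j)
  then show ?thesis by (auto simp: same_reading_def pres_eq.refl fun_eq_iff)
qed

lemma same_reading_far_commute:
  assumes "1 \<le> i" "i \<le> n - 1" "1 \<le> j" "j \<le> n - 1" "i + 2 \<le> j \<or> j + 2 \<le> i"
  shows "same_reading n [pos (Sig i), pos (Sig j)] [pos (Sig j), pos (Sig i)]"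
  unfolding same_reading_def
proof
  fix v
  have labels: "crossing_label (v(i := v (Suc i), Suc i := v i)) j = crossing_label v j"
    "crossing_label (v(j := v (Suc j), Suc j := v j)) i = crossing_label v i"
    using assms(5) by (auto simp: crossing_label_def)
  have "([pos (i, crossing_label v i), pos (j, crossing_label v j)],
         [pos (j, crossing_label v j), pos (i, crossing_label v i)]) \<in> br2_rels n"
    using assms unfolding br2_rels_def by (auto simp: crossing_label_def)
  then show "pres_eq (br2_rels n) (read_word [pos (Sig i), pos (Sig j)] v)
               (read_word [pos (Sig j), pos (Sig i)] v) \<and>
             read_state [pos (Sig i), pos (Sig j)] v = read_state [pos (Sig j), pos (Sig i)] v"
    using assms(5) labels by (auto simp: pos_def fun_eq_iff intro: pres_eq_relation)
qed

lemma same_reading_braid: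
  assumes "1 \<le> i" "i \<le> n - 2"
  shows "same_reading n [pos (Sig i), pos (Sig (i + 1)), pos (Sig i)]
                        [pos (Sig (i + 1)), pos (Sig i), pos (Sig (i + 1))]"
  unfolding same_reading_def
proof (intro allI conjI)
  fix v :: dots
  define L where "L = (\<lambda>x y :: bool. if x = y then 0 else (1::nat))"
  define a b c where "a = v i" and "b = v (Suc i)" and "c = v (Suc (Suc i))"
  \<comment> \<open>Both sides read the three pairwise disagreements of the dots on the three strands;
      their sum is even.\<close>
  have "([pos (i, L a b), pos (i + 1, L a c), pos (i, L b c)],
         [pos (i + 1, L b c), pos (i, L a c), pos (i + 1, L a b)]) \<in> br2_rels n"
    using assms unfolding br2_rels_def L_def by (auto split: if_splits)
  then show "pres_eq (br2_rels n) (read_word [pos (Sig i), pos (Sig (i + 1)), pos (Sig i)] v)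
               (read_word [pos (Sig (i + 1)), pos (Sig i), pos (Sig (i + 1))] v)"
    by (simp add: pos_def crossing_label_def L_def a_def b_def c_def pres_eq_relation)
  show "read_state [pos (Sig i), pos (Sig (i + 1)), pos (Sig i)] v =
        read_state [pos (Sig (i + 1)), pos (Sig i), pos (Sig (i + 1))] v"
    by (simp add: pos_def fun_eq_iff)
qed

lemma same_reading_brd_rels:
  assumes "(l, r) \<in> brd_rels n"
  shows "same_reading n l r"
  using assms unfolding brd_rels_def
proof (elim UnE CollectE exE conjE)
  fix i j
  assume "(l, r) = ([pos (Sig i), pos (Sig j)], [pos (Sig j), pos (Sig i)])"
    "1 \<le> i" "i \<le> n - 1" "1 \<le> j" "j \<le> n - 1" "i + 2 \<le> j \<or> j + 2 \<le> i"
  then show ?thesis using same_reading_far_commute by simp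
next
  fix i
  assume "(l, r) = ([pos (Sig i), pos (Sig (i + 1)), pos (Sig i)],
                    [pos (Sig (i + 1)), pos (Sig i), pos (Sig (i + 1))])" "1 \<le> i" "i \<le> n - 2"
  then show ?thesis using same_reading_braid by simp
qed (auto simp: same_reading_def pos_def fun_eq_iff crossing_label_def pres_eq.refl)

lemma pres_eq_brd_imp_same_reading: "pres_eq (brd_rels n) a b \<Longrightarrow> same_reading n a b"
proof (induction rule: pres_eq.induct)
  case (refl w)
  show ?case by (rule same_reading_refl)
next
  case (sym u v)
  show ?case using sym.IH by (rule same_reading_sym)
next
  case (trans u v w)
  show ?case using trans.IH by (rule same_reading_trans)
next
  case (cancel u g b v)
  show ?case using same_reading_context[OF same_reading_cancel] by simp
next
  case (rel l r u v)
  then show ?case by (intro same_reading_context same_reading_brd_rels)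
qed

lemma read_f_word:
  assumes "fst ` set w \<subseteq> gens2 n"
  shows "read_word (f_word w) (\<lambda>_. False) = w \<and> read_state (f_word w) (\<lambda>_. False) = (\<lambda>_. False)"
  using assms
proof (induction w)
  case Nil
  then show ?case by (simp add: f_word_def)
next
  case (Cons x xs)
  obtain i e b where x: "x = ((i, e), b)" by (metis prod.exhaust)
  have "e = 0 \<or> e = 1" using Cons.prems x by (auto simp: gens2_def)
  then have "read_word (if b then inv_word (f_gen (i, e)) else f_gen (i, e)) (\<lambda>_. False) = [x] \<and>
      read_state (if b then inv_word (f_gen (i, e)) else f_gen (i, e)) (\<lambda>_. False) = (\<lambda>_. False)"
    using x by (auto simp: inv_word_def pos_def crossing_label_def fun_eq_iff)
  with Cons x show ?case by (simp add: f_word_def)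
qed

theorem theorem3:
  fixes n :: nat and w1 w2 :: "(nat \<times> nat) word"
  assumes "n \<ge> 2"
    and "fst ` set w1 \<subseteq> gens2 n" and "fst ` set w2 \<subseteq> gens2 n"
    and "pres_eq (brd_rels n) (f_word w1) (f_word w2)"
  shows "pres_eq (br2_rels n) w1 w2"
proof -
  have "same_reading n (f_word w1) (f_word w2)"
    using assms(4) by (rule pres_eq_brd_imp_same_reading)
  then have "pres_eq (br2_rels n) (read_word (f_word w1) (\<lambda>_. False))
                                  (read_word (f_word w2) (\<lambda>_. False))"
    unfolding same_reading_def by blast
  then show ?thesis using read_f_word[OF assms(2)] read_f_word[OF assms(3)] by simp
qed

end
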